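(* Let $G=(V,E)$ be a $d$-regular graph on $n$ vertices with adjacency matrix $A$, and let $D = d\cdot I_n$. Let $\{\phi_1,\dots,\phi_n\}\subset\mathbb{R}^n$ be an orthonormal basis of eigenvectors of the symmetric matrix $AD^{-1}$, where $\phi_j$ has eigenvalue $\lambda_j$, the eigenvalues are ordered as $1=\lambda_1 \geq |\lambda_2| \geq \dots \geq |\lambda_n|\geq 0$, and $\phi_1 = \frac{1}{\sqrt n}(1,1,\dots,1)$. Then for every $2 \leq \ell \leq n-1$ there exists a vector $0 \neq w \in \mathbb{R}^n_{\geq 0}$ such that (1) $w$ has at most $\ell$ nonzero entries, and (2) $\langle \phi_j, w\rangle = 0$ for all $2 \leq j \leq \ell$.
   Context: $\langle\cdot,\cdot\rangle$ denotes the standard inner product on $\mathbb{R}^n$, and vectors in $\mathbb{R}^n$ are indexed by the vertices of $G$. *)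

theory Defs
  imports "HOL-Analysis.Analysis"
begin

definition simple_graph :: "('v \<Rightarrow> 'v \<Rightarrow> bool) \<Rightarrow> bool" where
  "simple_graph E \<longleftrightarrow> (\<forall>u v. E u v \<longleftrightarrow> E v u) \<and> (\<forall>v. \<not> E v v)"

definition regular_graph :: "('v \<Rightarrow> 'v \<Rightarrow> bool) \<Rightarrow> nat \<Rightarrow> bool" where
  "regular_graph E d \<longleftrightarrow> (\<forall>v. card {u. E v u} = d)"

definition adj_matrix :: "('v::finite \<Rightarrow> 'v \<Rightarrow> bool) \<Rightarrow> real^'v^'v" where
  "adj_matrix E = (\<chi> i j. if E i j then 1 else 0)"

end

theory Submission
  imports Defs
begin

text \<open>Project the standard basis vectors \<open>e\<^sub>i\<close> onto the span of \<open>\<phi>\<^sub>2, \<dots>, \<phi>\<^sub>\<ell>\<close>, obtaining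
  points \<open>q\<^sub>i\<close> with \<open>\<langle>\<phi>\<^sub>k, q\<^sub>i\<rangle> = \<phi>\<^sub>k(i)\<close>. Each \<open>\<phi>\<^sub>k\<close> (\<open>k \<ge> 2\<close>) is orthogonal to the constant
  vector \<open>\<phi>\<^sub>1\<close>, so its entries sum to zero and hence so do the \<open>q\<^sub>i\<close>: the origin lies in
  their convex hull. The \<open>q\<^sub>i\<close> span a space of dimension at most \<open>\<ell> - 1\<close>, so by
  Caratheodory's theorem the origin is a convex combination of at most \<open>\<ell>\<close> of them, and
  the weights of that combination form \<open>w\<close>.\<close>

lemma aff_dim_le_dim:
  fixes S :: "'a::euclidean_space set"
  shows "aff_dim S \<le> int (dim S)"
proof -
  have "aff_dim S \<le> aff_dim (span S)"
    by (rule aff_dim_subset) (rule span_superset)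
  then show ?thesis
    by (simp add: aff_dim_subspace)
qed

lemma zero_in_convex_hull_if_sum_zero:
  fixes q :: "'i::finite \<Rightarrow> 'a::real_vector"
  assumes "(\<Sum>i\<in>UNIV. q i) = 0"
  shows "0 \<in> convex hull (range q)"
proof -
  have "(\<Sum>i\<in>UNIV. (1 / real CARD('i)) *\<^sub>R q i) \<in> convex hull (range q)"
    by (rule convex_sum) (auto intro: hull_inc)
  then show ?thesis
    by (simp add: scaleR_sum_right[symmetric] assms)
qed

lemma caratheodory_indexed:
  fixes q :: "'i::finite \<Rightarrow> 'a::euclidean_space"
  assumes "y \<in> convex hull (range q)"
  obtains c where "\<forall>i. 0 \<le> c i" "(\<Sum>i\<in>UNIV. c i) = 1"
    "card {i. c i \<noteq> 0} \<le> dim (range q) + 1" "(\<Sum>i\<in>UNIV. c i *\<^sub>R q i) = y"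
proof -
  obtain S u where S: "finite S" "S \<subseteq> range q" "card S \<le> aff_dim (range q) + 1"
    and u: "\<forall>x\<in>S. 0 \<le> u x" "sum u S = 1" "(\<Sum>x\<in>S. u x *\<^sub>R x) = y"
    using assms unfolding convex_hull_caratheodory_aff_dim mem_Collect_eq by (elim exE conjE)
  obtain T where inj: "inj_on q T" and S_eq: "S = q ` T"
    using S(2) unfolding subset_image_inj by blast
  define c where "c i = (if i \<in> T then u (q i) else 0)" for i
  have sum_c: "(\<Sum>i\<in>UNIV. f (c i) (q i)) = (\<Sum>x\<in>S. f (u x) x)"
    if "\<And>x. f 0 x = 0" for f :: "real \<Rightarrow> 'a \<Rightarrow> 'b::comm_monoid_add"
  proof -
    have "(\<Sum>i\<in>UNIV. f (c i) (q i)) = (\<Sum>i\<in>UNIV. if i \<in> T then f (u (q i)) (q i) else 0)"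
      by (rule sum.cong) (simp_all add: c_def that)
    also have "\<dots> = (\<Sum>i\<in>T. f (u (q i)) (q i))"
      by (simp add: sum.If_cases)
    also have "\<dots> = (\<Sum>x\<in>S. f (u x) x)"
      using sum.reindex[OF inj, of "\<lambda>x. f (u x) x"] S_eq by simp
    finally show ?thesis .
  qed
  show thesis
  proof
    show "\<forall>i. 0 \<le> c i"
      using u(1) S_eq by (auto simp: c_def)
    show "(\<Sum>i\<in>UNIV. c i) = 1"
      using sum_c[of "\<lambda>a x. a"] u(2) by simp
    show "(\<Sum>i\<in>UNIV. c i *\<^sub>R q i) = y"
      using sum_c[of "\<lambda>a x. a *\<^sub>R x"] u(3) by simp
    have "card {i. c i \<noteq> 0} \<le> card T"
      by (rule card_mono) (auto simp: c_def)
    also have "\<dots> = card S"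
      using S_eq card_image[OF inj] by simp
    finally show "card {i. c i \<noteq> 0} \<le> dim (range q) + 1"
      using S(3) aff_dim_le_dim[of "range q"] by linarith
  qed
qed

lemma inner_orthonormal_combination:
  assumes "finite J" "k \<in> J"
    and "\<forall>i\<in>J. \<forall>j\<in>J. phi i \<bullet> phi j = (if i = j then 1 else 0)"
  shows "phi k \<bullet> (\<Sum>j\<in>J. a j *\<^sub>R phi j) = a k"
proof -
  have "phi k \<bullet> (\<Sum>j\<in>J. a j *\<^sub>R phi j) = (\<Sum>j\<in>J. if j = k then a k else 0)"
    by (simp add: inner_sum_right) (rule sum.cong, use assms in auto)
  then show ?thesis
    using assms by simp
qed

lemma sparse_nonneg_orthogonal_vector:
  fixes phi :: "'j \<Rightarrow> real^'n"
  assumes "finite J"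
    and orth: "\<forall>i\<in>J. \<forall>j\<in>J. phi i \<bullet> phi j = (if i = j then 1 else 0)"
    and entry_sum: "\<forall>j\<in>J. (\<Sum>i\<in>UNIV. phi j $ i) = 0"
  obtains w where "w \<noteq> 0" "\<forall>i. 0 \<le> w $ i" "card {i. w $ i \<noteq> 0} \<le> card J + 1"
    "\<forall>j\<in>J. phi j \<bullet> w = 0"
proof -
  define q where "q i = (\<Sum>j\<in>J. (phi j $ i) *\<^sub>R phi j)" for i
  have "(\<Sum>i\<in>UNIV. q i) = 0"
    unfolding q_def by (subst sum.swap) (simp add: scaleR_sum_left[symmetric] entry_sum)
  then have "0 \<in> convex hull (range q)"
    by (rule zero_in_convex_hull_if_sum_zero)
  then obtain c where c: "\<forall>i. 0 \<le> c i" "(\<Sum>i\<in>UNIV. c i) = 1"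
    "card {i. c i \<noteq> 0} \<le> dim (range q) + 1" "(\<Sum>i\<in>UNIV. c i *\<^sub>R q i) = 0"
    by (rule caratheodory_indexed)
  have "range q \<subseteq> span (phi ` J)"
    unfolding q_def by (intro image_subsetI span_sum span_scale span_base imageI)
  then have "dim (range q) \<le> dim (phi ` J)"
    using dim_subset dim_span by metis
  also have "\<dots> \<le> card (phi ` J)"
    using \<open>finite J\<close> by (simp add: dim_le_card')
  also have "\<dots> \<le> card J"
    using \<open>finite J\<close> by (rule card_image_le)
  finally have sparse: "card {i. c i \<noteq> 0} \<le> card J + 1"
    using c(3) by linarith
  have "phi k \<bullet> (\<chi> i. c i) = 0" if k: "k \<in> J" for k
  proof -
    have "phi k \<bullet> (\<chi> i. c i) = (\<Sum>i\<in>UNIV. c i * (phi k \<bullet> q i))"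
      using inner_orthonormal_combination[OF \<open>finite J\<close> k orth]
      by (simp add: q_def inner_vec_def mult.commute)
    also have "\<dots> = phi k \<bullet> (\<Sum>i\<in>UNIV. c i *\<^sub>R q i)"
      by (simp add: inner_sum_right)
    finally show ?thesis
      using c(4) by simp
  qed
  moreover have "(\<chi> i. c i) \<noteq> 0"
    using c(2) by (metis sum.neutral vec_lambda_beta zero_index zero_neq_one)
  ultimately show thesis
    using c(1) sparse by (intro that[of "\<chi> i. c i"]) auto
qed

lemma inner_const_vec: "x \<bullet> (\<chi> i. c) = c * (\<Sum>i\<in>UNIV. x $ i)"
  by (simp add: inner_vec_def sum_distrib_left mult.commute)

theorem lemma2:
  fixes E :: "'v::finite \<Rightarrow> 'v \<Rightarrow> bool"
    and d :: nat
    and phi :: "nat \<Rightarrow> real^'v"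
    and lam :: "nat \<Rightarrow> real"
  assumes graph: "simple_graph E"
    and reg: "regular_graph E d"
    and dpos: "d \<ge> 1"
    and orth: "\<forall>i\<in>{1..CARD('v)}. \<forall>j\<in>{1..CARD('v)}. phi i \<bullet> phi j = (if i = j then 1 else 0)"
    and basis: "span (phi ` {1..CARD('v)}) = UNIV"
    and eig: "\<forall>j\<in>{1..CARD('v)}.
       (adj_matrix E ** matrix_inv (mat (real d) :: real^'v^'v)) *v phi j = scaleR (lam j) (phi j)"
    and lam1: "lam 1 = 1"
    and lam12: "CARD('v) \<ge> 2 \<longrightarrow> lam 1 \<ge> \<bar>lam 2\<bar>"
    and ordered: "\<forall>j\<in>{2..<CARD('v)}. \<bar>lam j\<bar> \<ge> \<bar>lam (j + 1)\<bar>"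
    and phi1: "phi 1 = (\<chi> i. 1 / sqrt (real CARD('v)))"
  shows "\<forall>l. 2 \<le> l \<and> l \<le> CARD('v) - 1 \<longrightarrow>
    (\<exists>w :: real^'v. w \<noteq> 0 \<and> (\<forall>i. w $ i \<ge> 0) \<and> card {i. w $ i \<noteq> 0} \<le> l \<and>
        (\<forall>j\<in>{2..l}. phi j \<bullet> w = 0))"
proof (intro allI impI)
  fix l assume l: "2 \<le> l \<and> l \<le> CARD('v) - 1"
  have orth_J: "\<forall>i\<in>{2..l}. \<forall>j\<in>{2..l}. phi i \<bullet> phi j = (if i = j then 1 else 0)"
    using orth l by auto
  have "(\<Sum>i\<in>UNIV. phi j $ i) = 0" if "j \<in> {2..l}" for j
  proof -
    have "phi j \<bullet> phi 1 = 0"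
      using orth that l by auto
    then show ?thesis
      unfolding phi1 inner_const_vec by simp
  qed
  then obtain w :: "real^'v" where "w \<noteq> 0" "\<forall>i. 0 \<le> w $ i"
    "card {i. w $ i \<noteq> 0} \<le> card {2..l} + 1" "\<forall>j\<in>{2..l}. phi j \<bullet> w = 0"
    using sparse_nonneg_orthogonal_vector[OF _ orth_J] by blast
  moreover have "card {2..l} + 1 = l"
    using l by simp
  ultimately show "\<exists>w :: real^'v. w \<noteq> 0 \<and> (\<forall>i. w $ i \<ge> 0) \<and> card {i. w $ i \<noteq> 0} \<le> l \<and>
        (\<forall>j\<in>{2..l}. phi j \<bullet> w = 0)"
    by auto
qed

end
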